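(* For every $\vec\beta=(\beta_1,\beta_2,\beta_3)\in\mathbb R^3$ there exists a smooth, trace-free, divergence-free symmetric $(0,2)$-tensor $\sigma$ on $\mathbb R^3$ with compact support in $A_1=\{1<|x|<2\}$, satisfying $L\sigma=0$ and \[\int_{A_1}x^p\sum_{i,j,k}(\sigma_{ij,k})^2\,dx=\beta_p\quad(p=1,2,3).\]
   Context: Cartesian coordinates on $\mathbb R^3$ with Euclidean metric; commas denote partial derivatives; trace and divergence are Euclidean. $L\sigma=\sum_{i,j}(\sigma_{ij,ij}-\sigma_{ii,jj})$. *)

theory Defs
  imports "HOL-Analysis.Analysis"
begin

definition pd :: "'n::finite \<Rightarrow> (real^'n \<Rightarrow> real) \<Rightarrow> real^'n \<Rightarrow> real" where
  "pd k f x = deriv (\<lambda>t. f (x + t *\<^sub>R axis k 1)) 0"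

fun ipd :: "'n::finite list \<Rightarrow> (real^'n \<Rightarrow> real) \<Rightarrow> real^'n \<Rightarrow> real" where
  "ipd [] f = f"
| "ipd (k # ks) f = pd k (ipd ks f)"

definition smooth_fun :: "(real^'n::finite \<Rightarrow> real) \<Rightarrow> bool" where
  "smooth_fun f \<longleftrightarrow> (\<forall>ks. continuous_on UNIV (ipd ks f) \<and>
      (\<forall>k x. (\<lambda>t. ipd ks f (x + t *\<^sub>R axis k 1)) differentiable (at 0)))"

definition tsupport :: "('i \<Rightarrow> 'j \<Rightarrow> real^'n::finite \<Rightarrow> real) \<Rightarrow> (real^'n) set" where
  "tsupport \<sigma> = closure {x. \<exists>i j. \<sigma> i j x \<noteq> 0}"

definition A1 :: "(real^3) set" where
  "A1 = {x. 1 < norm x \<and> norm x < 2}"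

definition Lop :: "(3 \<Rightarrow> 3 \<Rightarrow> real^3 \<Rightarrow> real) \<Rightarrow> real^3 \<Rightarrow> real" where
  "Lop \<sigma> x = (\<Sum>i\<in>UNIV. \<Sum>j\<in>UNIV. pd j (pd i (\<sigma> i j)) x - pd j (pd j (\<sigma> i i)) x)"

end

theory Submission
  imports Defs "HOL-Computational_Algebra.Polynomial"
begin

text \<open>Let \<open>\<phi>\<^sub>c(x) = g(x\<^sub>1 - c\<^sub>1) g(x\<^sub>2 - c\<^sub>2) g(x\<^sub>3 - c\<^sub>3)\<close> for a smooth bump \<open>g\<close> supported in
  \<open>[-1/8, 1/8]\<close>, and let \<open>\<sigma>\<^sup>c\<close> be a symmetric tensor whose entries are suitable combinations of
  third derivatives of \<open>\<phi>\<^sub>c\<close>, chosen so that expanding the derivatives shows that \<open>\<sigma>\<^sup>c\<close> is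
  trace-free, divergence-free and satisfies \<open>L\<sigma>\<^sup>c = 0\<close>. Its energy density \<open>|\<nabla>\<sigma>\<^sup>c|\<^sup>2\<close> is invariant
  under the point reflection \<open>x \<mapsto> 2c - x\<close>, so its first moments are \<open>c\<close> times its (positive)
  total energy. Superposing weighted copies of \<open>\<sigma>\<^sup>c\<close> at the six centres \<open>c = \<plusminus>(3/2) e\<^sub>p\<close>, whose
  cubes are disjoint and lie in \<open>A\<^sub>1\<close>, the energy densities simply add, and squared weights
  proportional to the positive and the negative part of \<open>\<beta>\<^sub>p\<close> on the \<open>p\<close>-th axis give the moments \<open>\<beta>\<close>.\<close>

section \<open>Smooth bumps on the line\<close>

lemma poly_times_exp_neg_tendsto_0: "((\<lambda>u. poly p u * exp (-u)) \<longlongrightarrow> (0::real)) at_top"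
proof -
  have "(\<lambda>u. poly p u * exp (-u)) = (\<lambda>u. \<Sum>i\<le>degree p. coeff p i * (u ^ i / exp u))"
    by (auto simp: poly_altdef sum_distrib_right exp_minus field_simps sum_divide_distrib)
  then show ?thesis
    by (simp only:) (intro tendsto_null_sum tendsto_mult_right_zero tendsto_power_div_exp_0)
qed

text \<open>\<open>flat_deriv n\<close> is the \<open>n\<close>-th derivative of \<open>exp (-1/s)\<close>, extended by \<open>0\<close> to \<open>s \<le> 0\<close>:
  differentiating \<open>P(1/s) exp (-1/s)\<close> gives \<open>(P - P\<Zprime>)(1/s) exp (-1/s) / s\<^sup>2\<close>.\<close>

fun flat_poly :: "nat \<Rightarrow> real poly" where
  "flat_poly 0 = 1"
| "flat_poly (Suc n) = [:0, 0, 1:] * (flat_poly n - pderiv (flat_poly n))"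

definition flat_deriv :: "nat \<Rightarrow> real \<Rightarrow> real" where
  "flat_deriv n s = (if s > 0 then poly (flat_poly n) (1/s) * exp (-1/s) else 0)"

lemma flat_deriv_eq_0: "s \<le> 0 \<Longrightarrow> flat_deriv n s = 0"
  by (simp add: flat_deriv_def)

lemma flat_deriv_has_derivative_pos:
  assumes "s > 0"
  shows "(flat_deriv n has_real_derivative flat_deriv (Suc n) s) (at s)"
proof -
  have "((\<lambda>s. poly (flat_poly n) (1/s) * exp (-1/s)) has_real_derivative
        poly (pderiv (flat_poly n)) (1/s) * (- 1/s^2) * exp (-1/s) + poly (flat_poly n) (1/s) * (exp (-1/s) * (1/s^2))) (at s)"
    using assms
    by (auto intro!: derivative_eq_intros DERIV_chain2[OF poly_DERIV] simp: power2_eq_square field_simps)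
  also have "poly (pderiv (flat_poly n)) (1/s) * (- 1/s^2) * exp (-1/s) + poly (flat_poly n) (1/s) * (exp (-1/s) * (1/s^2))
     = flat_deriv (Suc n) s"
    using assms by (simp add: flat_deriv_def algebra_simps power2_eq_square divide_simps)
  finally show ?thesis
    by (rule has_field_derivative_transform_within_open[where S="{0<..}"]) (use assms in \<open>auto simp: flat_deriv_def\<close>)
qed

lemma flat_deriv_has_derivative_0: "(flat_deriv n has_real_derivative 0) (at 0)"
proof -
  have "((\<lambda>y. flat_deriv n y / y) \<longlongrightarrow> 0) (at 0)"
  proof (rule filterlim_split_at_real)
    have "\<forall>\<^sub>F y in at_left (0::real). y \<in> {-1<..<0}"
      by (rule eventually_at_left_real) simp
    then have "\<forall>\<^sub>F y in at_left (0::real). flat_deriv n y / y = 0"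
      by eventually_elim (auto simp: flat_deriv_def)
    then show "((\<lambda>y. flat_deriv n y / y) \<longlongrightarrow> 0) (at_left 0)"
      by (rule tendsto_eventually)
  next
    have "\<forall>\<^sub>F u in at_top. poly (flat_poly n * [:0,1:]) u * exp (-u) = flat_deriv n (inverse u) / inverse u"
      using eventually_gt_at_top[of "0::real"] by eventually_elim (auto simp: flat_deriv_def field_simps)
    then have "((\<lambda>u. flat_deriv n (inverse u) / inverse u) \<longlongrightarrow> 0) at_top"
      by (rule Lim_transform_eventually[OF poly_times_exp_neg_tendsto_0])
    then show "((\<lambda>y. flat_deriv n y / y) \<longlongrightarrow> 0) (at_right 0)"
      by (simp add: filterlim_at_right_to_top)
  qed
  then show ?thesis
    by (simp add: has_field_derivative_iff flat_deriv_def)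
qed

lemma flat_deriv_has_derivative: "(flat_deriv n has_real_derivative flat_deriv (Suc n) s) (at s)"
proof -
  consider "s > 0" | "s < 0" | "s = 0" by linarith
  then show ?thesis
  proof cases
    case 2
    have "((\<lambda>_. 0) has_real_derivative 0) (at s)" by simp
    then have "(flat_deriv n has_real_derivative 0) (at s)"
      by (rule has_field_derivative_transform_within_open[where S="{..<0}"]) (use 2 in \<open>auto simp: flat_deriv_def\<close>)
    with 2 show ?thesis by (simp add: flat_deriv_eq_0)
  qed (simp_all add: flat_deriv_has_derivative_pos flat_deriv_has_derivative_0 flat_deriv_eq_0)
qed

lemma flat_deriv_has_derivative_chain [derivative_intros]:
  "(g has_real_derivative g') (at x within S) \<Longrightarrow>
   ((\<lambda>x. flat_deriv n (g x)) has_real_derivative flat_deriv (Suc n) (g x) * g') (at x within S)"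
  by (rule DERIV_chain2[OF flat_deriv_has_derivative])

lemma leibniz_has_real_derivative:
  fixes F H :: "nat \<Rightarrow> real \<Rightarrow> real"
  assumes F: "\<And>n t. (F n has_real_derivative F (Suc n) t) (at t)"
      and H: "\<And>n t. (H n has_real_derivative H (Suc n) t) (at t)"
  shows "((\<lambda>t. \<Sum>i\<le>n. real (n choose i) * (F i t * H (n - i) t)) has_real_derivative
          (\<Sum>i\<le>Suc n. real (Suc n choose i) * (F i t * H (Suc n - i) t))) (at t)"
proof -
  have "((\<lambda>t. \<Sum>i\<le>n. real (n choose i) * (F i t * H (n - i) t)) has_real_derivative
          (\<Sum>i\<le>n. real (n choose i) * (F (Suc i) t * H (n - i) t)) +
          (\<Sum>i\<le>n. real (n choose i) * (F i t * H (Suc n - i) t))) (at t)"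
    unfolding sum.distrib[symmetric]
    by (intro DERIV_sum DERIV_cong[OF DERIV_cmult[OF DERIV_mult[OF F H]]]) (simp add: algebra_simps Suc_diff_le)
  also have "(\<Sum>i\<le>n. real (n choose i) * (F (Suc i) t * H (n - i) t)) =
             (\<Sum>i\<le>Suc n. (if i = 0 then 0 else real (n choose (i - 1))) * (F i t * H (Suc n - i) t))"
    by (subst sum.atMost_Suc_shift) simp
  also have "(\<Sum>i\<le>n. real (n choose i) * (F i t * H (Suc n - i) t)) =
             (\<Sum>i\<le>Suc n. real (n choose i) * (F i t * H (Suc n - i) t))"
    by simp
  also have "(\<Sum>i\<le>Suc n. (if i = 0 then 0 else real (n choose (i - 1))) * (F i t * H (Suc n - i) t)) +
             (\<Sum>i\<le>Suc n. real (n choose i) * (F i t * H (Suc n - i) t)) =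
             (\<Sum>i\<le>Suc n. real (Suc n choose i) * (F i t * H (Suc n - i) t))"
    unfolding sum.distrib[symmetric] by (rule sum.cong) (auto simp: algebra_simps gr0_conv_Suc)
  finally show ?thesis .
qed

text \<open>\<open>bump r n\<close> is the \<open>n\<close>-th derivative, by Leibniz' rule, of \<open>t \<mapsto> e(r + t) e(r - t)\<close> with
  \<open>e = flat_deriv 0\<close>.\<close>

definition bump :: "real \<Rightarrow> nat \<Rightarrow> real \<Rightarrow> real" where
  "bump r n t = (\<Sum>i\<le>n. real (n choose i) * (flat_deriv i (r + t) * ((-1) ^ (n - i) * flat_deriv (n - i) (r - t))))"

lemma bump_has_derivative: "(bump r n has_real_derivative bump r (Suc n) t) (at t)"
proof -
  have "((\<lambda>t. flat_deriv n (r + t)) has_real_derivative flat_deriv (Suc n) (r + t)) (at t)" for n t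
    by (auto intro!: derivative_eq_intros)
  moreover have "((\<lambda>t. (-1) ^ n * flat_deriv n (r - t)) has_real_derivative
                  (-1) ^ Suc n * flat_deriv (Suc n) (r - t)) (at t)" for n t
    by (auto intro!: derivative_eq_intros)
  ultimately show ?thesis
    unfolding bump_def by (rule leibniz_has_real_derivative)
qed

lemma bump_has_derivative_chain [derivative_intros]:
  "(g has_real_derivative g') (at x within S) \<Longrightarrow>
   ((\<lambda>x. bump r n (g x)) has_real_derivative bump r (Suc n) (g x) * g') (at x within S)"
  by (rule DERIV_chain2[OF bump_has_derivative])

lemma continuous_on_bump [continuous_intros]:
  "continuous_on S f \<Longrightarrow> continuous_on S (\<lambda>x. bump r n (f x))"
  by (rule continuous_on_compose2[of UNIV "bump r n"])
     (auto intro: continuous_at_imp_continuous_on DERIV_isCont[OF bump_has_derivative])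

lemma bump_eq_0: "r \<le> \<bar>t\<bar> \<Longrightarrow> bump r n t = 0"
  unfolding bump_def by (rule sum.neutral) (auto simp: flat_deriv_eq_0 abs_if split: if_splits)

lemma bump_minus: "bump r n (-t) = (-1) ^ n * bump r n t"
proof (induction n arbitrary: t)
  case 0
  then show ?case by (simp add: bump_def)
next
  case (Suc n)
  have "((\<lambda>t. bump r n (-t)) has_real_derivative - bump r (Suc n) (-t)) (at t)"
    by (auto intro!: derivative_eq_intros)
  moreover have "((\<lambda>t. bump r n (-t)) has_real_derivative (-1) ^ n * bump r (Suc n) t) (at t)"
    unfolding Suc.IH by (auto intro!: derivative_eq_intros)
  ultimately show ?case
    by (auto dest: DERIV_unique)
qed

lemma bump_0_0_neq_0: "r > 0 \<Longrightarrow> bump r 0 0 \<noteq> 0"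
  by (simp add: bump_def flat_deriv_def)

lemma bump_not_identically_0:
  assumes "r > 0"
  shows "\<exists>t. bump r n t \<noteq> 0"
proof (induction n)
  case 0
  then show ?case using bump_0_0_neq_0[OF assms] by blast
next
  case (Suc n)
  show ?case
  proof (rule ccontr)
    assume "\<nexists>t. bump r (Suc n) t \<noteq> 0"
    then have "(bump r n has_real_derivative 0) (at t)" for t
      using bump_has_derivative[of r n t] by simp
    then have "bump r n t = bump r n r" for t
      by (simp add: DERIV_isconst_all)
    with Suc show False
      by (simp add: bump_eq_0)
  qed
qed

section \<open>Smooth functions built from products of bumps\<close>

lemma smooth_fun_line_has_derivative:
  assumes "smooth_fun f"
  shows "((\<lambda>t. ipd ks f (x + t *\<^sub>R axis k 1)) has_real_derivative pd k (ipd ks f) x) (at 0)"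
  using assms by (simp add: smooth_fun_def pd_def DERIV_deriv_iff_real_differentiable)

lemma pd_sum_scaled:
  fixes f :: "'s \<Rightarrow> real^'n::finite \<Rightarrow> real"
  assumes "finite S" "\<And>s. s \<in> S \<Longrightarrow> ((\<lambda>t. f s (x + t *\<^sub>R axis k 1)) has_real_derivative f' s) (at 0)"
  shows "pd k (\<lambda>y. \<Sum>s\<in>S. a s * f s y) x = (\<Sum>s\<in>S. a s * f' s)"
  unfolding pd_def by (intro DERIV_imp_deriv DERIV_sum DERIV_cmult assms)

lemma ipd_sum_scaled:
  fixes f :: "'s \<Rightarrow> real^'n::finite \<Rightarrow> real"
  assumes "finite S" "\<And>s. s \<in> S \<Longrightarrow> smooth_fun (f s)"
  shows "ipd ks (\<lambda>y. \<Sum>s\<in>S. a s * f s y) = (\<lambda>y. \<Sum>s\<in>S. a s * ipd ks (f s) y)"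
proof (induction ks)
  case (Cons k ks)
  show ?case
    by (auto simp: Cons fun_eq_iff intro!: pd_sum_scaled assms smooth_fun_line_has_derivative)
qed simp

lemma smooth_fun_sum_scaled:
  fixes f :: "'s \<Rightarrow> real^'n::finite \<Rightarrow> real"
  assumes "finite S" "\<And>s. s \<in> S \<Longrightarrow> smooth_fun (f s)"
  shows "smooth_fun (\<lambda>y. \<Sum>s\<in>S. a s * f s y)"
proof -
  have "continuous_on UNIV (\<lambda>y. \<Sum>s\<in>S. a s * ipd ks (f s) y) \<and>
        (\<lambda>t. \<Sum>s\<in>S. a s * ipd ks (f s) (x + t *\<^sub>R axis k 1)) differentiable at 0" for ks k x
    using assms unfolding real_differentiable_def
    by (fastforce simp: smooth_fun_def intro!: continuous_intros DERIV_sum DERIV_cmult smooth_fun_line_has_derivative)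
  then show ?thesis
    by (simp add: smooth_fun_def ipd_sum_scaled[OF assms])
qed

text \<open>\<open>bump_mono r c m\<close> is the partial derivative \<open>\<partial>\<^sup>m\<phi>\<^sub>c\<close> of \<open>\<phi>\<^sub>c(x) = \<Prod>\<^sub>k bump r 0 (x\<^sub>k - c\<^sub>k)\<close>, so a list of
  terms \<open>(\<alpha>, m)\<close> encodes \<open>\<Sum> \<alpha> \<partial>\<^sup>m\<phi>\<^sub>c\<close>, and \<open>diff_terms k\<close> differentiates it in direction \<open>k\<close>.\<close>

type_synonym 'n bump_terms = "(real \<times> (nat^'n)) list"

definition bump_mono :: "real \<Rightarrow> real^'n \<Rightarrow> nat^'n \<Rightarrow> real^'n::finite \<Rightarrow> real" where
  "bump_mono r c m x = (\<Prod>k\<in>UNIV. bump r (m$k) (x$k - c$k))"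

definition bump_sum :: "real \<Rightarrow> real^'n \<Rightarrow> 'n bump_terms \<Rightarrow> real^'n::finite \<Rightarrow> real" where
  "bump_sum r c es x = (\<Sum>(\<alpha>, m)\<leftarrow>es. \<alpha> * bump_mono r c m x)"

definition diff_terms :: "'n::finite \<Rightarrow> 'n bump_terms \<Rightarrow> 'n bump_terms" where
  "diff_terms k es = map (\<lambda>(\<alpha>, m). (\<alpha>, m + axis k 1)) es"

lemma bump_mono_line_has_derivative:
  "((\<lambda>t. bump_mono r c m (x + t *\<^sub>R axis k 1)) has_real_derivative bump_mono r c (m + axis k 1) x) (at 0)"
proof -
  define rest where "rest = (\<Prod>j\<in>UNIV - {k}. bump r (m$j) (x$j - c$j))"
  have "bump_mono r c m (x + t *\<^sub>R axis k 1) = bump r (m$k) (x$k + t - c$k) * rest" for t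
    unfolding bump_mono_def rest_def
    by (subst prod.remove[of UNIV k]) (auto simp: axis_def intro!: prod.cong)
  moreover have "bump_mono r c (m + axis k 1) x = bump r (Suc (m$k)) (x$k - c$k) * rest"
    unfolding bump_mono_def rest_def
    by (subst prod.remove[of UNIV k]) (auto simp: axis_def intro!: prod.cong)
  ultimately show ?thesis
    by (auto intro!: derivative_eq_intros)
qed

lemma bump_sum_line_has_derivative:
  "((\<lambda>t. bump_sum r c es (x + t *\<^sub>R axis k 1)) has_real_derivative bump_sum r c (diff_terms k es) x) (at 0)"
  by (induction es) (auto simp: bump_sum_def diff_terms_def intro!: derivative_eq_intros bump_mono_line_has_derivative)

lemma pd_bump_sum: "pd k (bump_sum r c es) = bump_sum r c (diff_terms k es)"
  by (auto simp: fun_eq_iff pd_def intro!: DERIV_imp_deriv bump_sum_line_has_derivative)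

lemma ipd_bump_sum: "ipd ks (bump_sum r c es) = bump_sum r c (foldr diff_terms ks es)"
  by (induction ks) (simp_all add: pd_bump_sum)

lemma continuous_on_bump_sum [continuous_intros]: "continuous_on S (bump_sum r c es)"
  unfolding bump_sum_def bump_mono_def
  by (induction es) (auto intro!: continuous_intros)

lemma smooth_fun_bump_sum: "smooth_fun (bump_sum r c es)"
  unfolding smooth_fun_def ipd_bump_sum real_differentiable_def
  by (blast intro: continuous_on_bump_sum bump_sum_line_has_derivative)

abbreviation cube :: "real^'n \<Rightarrow> real \<Rightarrow> (real^'n::finite) set" where
  "cube c r \<equiv> box (c - vec r) (c + vec r)"

lemma bump_mono_eq_0:
  assumes "x \<notin> cube c r"
  shows "bump_mono r c m x = 0"
proof -
  obtain k where "\<not> (c$k - r < x$k \<and> x$k < c$k + r)"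
    using assms by (auto simp: mem_box_cart)
  then have "r \<le> \<bar>x$k - c$k\<bar>"
    by linarith
  then show ?thesis
    unfolding bump_mono_def by (intro prod_zero) (auto intro: bump_eq_0)
qed

lemma bump_sum_eq_0: "x \<notin> cube c r \<Longrightarrow> bump_sum r c es x = 0"
  by (induction es) (auto simp: bump_sum_def bump_mono_eq_0)

lemma bump_mono_reflect: "bump_mono r c m (2 *\<^sub>R c - x) = (-1) ^ (\<Sum>k\<in>UNIV. m$k) * bump_mono r c m x"
proof -
  have "bump r (m$k) ((2 *\<^sub>R c - x)$k - c$k) = (-1) ^ (m$k) * bump r (m$k) (x$k - c$k)" for k
    using bump_minus[of r "m$k" "x$k - c$k"] by simp
  then show ?thesis
    by (simp add: bump_mono_def power_sum prod.distrib)
qed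

lemma bump_sum_reflect:
  assumes "\<forall>(\<alpha>, m)\<in>set es. (\<Sum>k\<in>UNIV. m$k) = d"
  shows "bump_sum r c es (2 *\<^sub>R c - x) = (-1) ^ d * bump_sum r c es x"
  using assms by (induction es) (auto simp: bump_sum_def bump_mono_reflect algebra_simps)

lemma degree_diff_terms:
  assumes "\<forall>(\<alpha>, m)\<in>set es. (\<Sum>k\<in>UNIV. m$k) = d"
  shows "\<forall>(\<alpha>, m)\<in>set (diff_terms j es). (\<Sum>k\<in>UNIV. m$k) = Suc d"
  using assms by (auto simp: diff_terms_def sum.distrib axis_def)

section \<open>Integrals of compactly supported functions\<close>

lemma integral_pos_if_continuous_pos:
  fixes f :: "'a::euclidean_space \<Rightarrow> real"
  assumes int: "f integrable_on UNIV" and cont: "continuous_on UNIV f"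
    and nonneg: "\<And>x. 0 \<le> f x" and pos: "0 < f x0"
  shows "0 < integral UNIV f"
proof -
  obtain d where d: "d > 0" "\<And>y. dist y x0 < d \<Longrightarrow> dist (f y) (f x0) < f x0 / 2"
    using cont pos unfolding continuous_on_iff by (metis UNIV_I half_gt_zero)
  have "((\<lambda>_. 1) has_integral measure lborel (ball x0 d)) (ball x0 d)"
    by (rule has_integral_measure_lborel) (use emeasure_lborel_ball_finite in auto)
  from has_integral_cmul[OF this, of "f x0 / 2"]
  have "((\<lambda>_. f x0 / 2) has_integral measure lborel (ball x0 d) * (f x0 / 2)) (ball x0 d)"
    by (simp add: mult.commute)
  then have "((\<lambda>x. if x \<in> ball x0 d then f x0 / 2 else 0) has_integral measure lborel (ball x0 d) * (f x0 / 2)) UNIV"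
    by (simp only: has_integral_restrict_UNIV)
  moreover have "(if x \<in> ball x0 d then f x0 / 2 else 0) \<le> f x" for x
    using d(2)[of x] nonneg[of x] abs_ge_self[of "f x0 - f x"] by (auto simp: dist_commute dist_real_def)
  ultimately have "measure lborel (ball x0 d) * (f x0 / 2) \<le> integral UNIV f"
    by (rule has_integral_le[OF _ integrable_integral[OF int]])
  moreover have "0 < measure lborel (ball x0 d) * (f x0 / 2)"
    using content_ball_pos[OF d(1)] pos by simp
  ultimately show ?thesis
    by linarith
qed

lemma integral_cbox_eq_0_if_odd:
  fixes h :: "'a::euclidean_space \<Rightarrow> real"
  assumes int: "h integrable_on cbox (c - d) (c + d)" and odd: "\<And>x. h (2 *\<^sub>R c - x) = - h x"
  shows "integral (cbox (c - d) (c + d)) h = 0"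
proof -
  define I where "I = integral (cbox (c - d) (c + d)) h"
  have hI: "(h has_integral I) (cbox (c - d) (c + d))"
    unfolding I_def by (rule integrable_integral[OF int])
  have "((\<lambda>x. h ((-1) *\<^sub>R x + 2 *\<^sub>R c)) has_integral I)
          ((\<lambda>x. (1 / -1) *\<^sub>R x + - ((1 / -1) *\<^sub>R (2 *\<^sub>R c))) ` cbox (c - d) (c + d))"
    using has_integral_affinity[OF hI, of "-1" "2 *\<^sub>R c"] by simp
  moreover have "(\<lambda>x. (1 / -1) *\<^sub>R x + - ((1 / -1) *\<^sub>R (2 *\<^sub>R c))) ` cbox (c - d) (c + d) = cbox (c - d) (c + d)"
    by (subst image_affinity_cbox) (simp add: algebra_simps scaleR_2)
  moreover have "h ((-1) *\<^sub>R x + 2 *\<^sub>R c) = - h x" for x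
    using odd[of x] by (simp add: algebra_simps)
  ultimately have "(h has_integral - I) (cbox (c - d) (c + d))"
    by (simp add: has_integral_neg_iff)
  with hI have "I = - I"
    by (rule has_integral_unique)
  then show ?thesis
    by (simp add: I_def)
qed

lemma integrable_on_UNIV_if_vanishing_outside_cbox:
  fixes f :: "'a::euclidean_space \<Rightarrow> real"
  assumes "continuous_on (cbox a b) f" "\<And>x. x \<notin> cbox a b \<Longrightarrow> f x = 0"
  shows "f integrable_on UNIV"
  using integrable_on_superset[OF integrable_continuous[OF assms(1)] assms(2)] by simp

lemma has_integral_moment_if_symmetric:
  fixes f :: "real^'n::finite \<Rightarrow> real"
  assumes cont: "continuous_on UNIV f" and supp: "\<And>x. x \<notin> cbox (c - d) (c + d) \<Longrightarrow> f x = 0"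
    and sym: "\<And>x. f (2 *\<^sub>R c - x) = f x"
  shows "((\<lambda>x. x$p * f x) has_integral c$p * integral UNIV f) UNIV"
proof -
  define h where "h x = (x$p - c$p) * f x" for x
  have h_cont: "continuous_on S h" for S
    unfolding h_def using continuous_on_subset[OF cont] by (intro continuous_intros) auto
  have "(h has_integral integral (cbox (c - d) (c + d)) h) (cbox (c - d) (c + d))"
    by (intro integrable_integral integrable_continuous h_cont)
  moreover have "integral (cbox (c - d) (c + d)) h = 0"
  proof (rule integral_cbox_eq_0_if_odd)
    show "h (2 *\<^sub>R c - x) = - h x" for x
      by (simp add: h_def sym algebra_simps)
  qed (intro integrable_continuous h_cont)
  ultimately have "(h has_integral 0) (cbox (c - d) (c + d))"
    by simp
  then have "(h has_integral 0) UNIV"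
    by (rule has_integral_on_superset) (simp_all add: h_def supp)
  moreover have "((\<lambda>x. c$p * f x) has_integral c$p * integral UNIV f) UNIV"
  proof (intro has_integral_mult_right integrable_integral)
    show "f integrable_on UNIV"
      using continuous_on_subset[OF cont] supp by (rule integrable_on_UNIV_if_vanishing_outside_cbox) simp
  qed
  ultimately have "((\<lambda>x. h x + c$p * f x) has_integral 0 + c$p * integral UNIV f) UNIV"
    by (rule has_integral_add)
  then show ?thesis
    by (simp add: h_def algebra_simps)
qed

section \<open>A trace-free, divergence-free tensor annihilated by \<open>L\<close>\<close>

lemma prod_3: "prod f (UNIV::3 set) = f 1 * f 2 * f 3"
  unfolding UNIV_3 by (simp add: ac_simps)

lemma bump_mono_3:
  fixes m :: "nat^3"
  shows "bump_mono r c m x = bump r (m$1) (x$1 - c$1) * bump r (m$2) (x$2 - c$2) * bump r (m$3) (x$3 - c$3)"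
  by (simp add: bump_mono_def prod_3)

definition stress_terms :: "3 \<Rightarrow> 3 \<Rightarrow> 3 bump_terms" where
  "stress_terms i j =
    (if i = 1 \<and> j = 1 then [(-1, vector [0,3,0]), (-1, vector [0,1,2])]
     else if i = 2 \<and> j = 2 then [(1, vector [0,1,2]), (-1, vector [2,1,0])]
     else if i = 3 \<and> j = 3 then [(1, vector [2,1,0]), (1, vector [0,3,0])]
     else if i = 1 \<and> j = 2 \<or> i = 2 \<and> j = 1 then [(1, vector [1,2,0]), (1, vector [1,0,2])]
     else if i = 2 \<and> j = 3 \<or> i = 3 \<and> j = 2 then [(-1, vector [2,0,1]), (-1, vector [0,2,1])]
     else [])"

lemma stress_terms_sym: "stress_terms i j = stress_terms j i"
  using exhaust_3[of i] exhaust_3[of j] by (elim disjE) (simp_all add: stress_terms_def)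

lemma stress_terms_degree: "\<forall>(\<alpha>, m)\<in>set (stress_terms i j). (\<Sum>k\<in>UNIV. m$k) = 3"
  using exhaust_3[of i] exhaust_3[of j] by (elim disjE) (simp_all add: stress_terms_def sum_3)

lemma stress_terms_trace: "(\<Sum>i\<in>UNIV. bump_sum r c (stress_terms i i) x) = 0"
  by (simp add: sum_3 stress_terms_def bump_sum_def)

lemma stress_terms_div: "(\<Sum>i\<in>UNIV. bump_sum r c (diff_terms i (stress_terms i j)) x) = 0"
  using exhaust_3[of j]
  by (elim disjE) (simp_all add: sum_3 stress_terms_def bump_sum_def diff_terms_def bump_mono_3 axis_def eval_nat_numeral)

lemma stress_terms_Lop:
  "(\<Sum>i\<in>UNIV. \<Sum>j\<in>UNIV. bump_sum r c (diff_terms j (diff_terms i (stress_terms i j))) x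
                          - bump_sum r c (diff_terms j (diff_terms j (stress_terms i i))) x) = 0"
  by (simp add: sum_3 stress_terms_def bump_sum_def diff_terms_def bump_mono_3 axis_def eval_nat_numeral)

definition stress_energy :: "real \<Rightarrow> real^3 \<Rightarrow> real^3 \<Rightarrow> real" where
  "stress_energy r c x = (\<Sum>i\<in>UNIV. \<Sum>j\<in>UNIV. \<Sum>k\<in>UNIV. (bump_sum r c (diff_terms k (stress_terms i j)) x)\<^sup>2)"

lemma continuous_on_stress_energy: "continuous_on S (stress_energy r c)"
  unfolding stress_energy_def[abs_def] by (intro continuous_intros)

lemma stress_energy_eq_0: "x \<notin> cbox (c - vec r) (c + vec r) \<Longrightarrow> stress_energy r c x = 0"
  using box_subset_cbox by (force simp: stress_energy_def bump_sum_eq_0)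

lemma stress_energy_reflect: "stress_energy r c (2 *\<^sub>R c - x) = stress_energy r c x"
  unfolding stress_energy_def
  by (simp add: bump_sum_reflect[OF degree_diff_terms[OF stress_terms_degree]] power_mult_distrib)

lemma stress_energy_nonneg: "0 \<le> stress_energy r c x"
  unfolding stress_energy_def by (intro sum_nonneg) simp

lemma has_integral_moment_stress_energy:
  "((\<lambda>x. x$p * stress_energy r c x) has_integral c$p * integral UNIV (stress_energy r c)) UNIV"
  by (rule has_integral_moment_if_symmetric[where d="vec r"])
     (simp_all add: continuous_on_stress_energy stress_energy_eq_0 stress_energy_reflect)

lemma bump_2_0_combination_neq_0:
  assumes "r > 0"
  shows "\<exists>a b. bump r 2 a * bump r 0 b + bump r 0 a * bump r 2 b \<noteq> 0"
proof (cases "bump r 2 0 = 0")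
  case True
  obtain t where "bump r 2 t \<noteq> 0"
    using bump_not_identically_0[OF assms] by blast
  with True bump_0_0_neq_0[OF assms] show ?thesis
    by (intro exI[of _ t] exI[of _ 0]) simp
next
  case False
  with bump_0_0_neq_0[OF assms] show ?thesis
    by (intro exI[of _ 0]) simp
qed

lemma stress_energy_integral_pos:
  assumes "r > 0"
  shows "0 < integral UNIV (stress_energy r c)"
proof -
  obtain t where t: "bump r 2 t \<noteq> 0"
    using bump_not_identically_0[OF assms] by blast
  obtain a b where ab: "bump r 2 a * bump r 0 b + bump r 0 a * bump r 2 b \<noteq> 0"
    using bump_2_0_combination_neq_0[OF assms] by blast
  \<comment> \<open>at \<open>x0\<close> already the component \<open>\<partial>\<^sub>1\<sigma>\<^sub>1\<^sub>2\<close> is nonzero\<close>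
  define x0 where "x0 = c + vector [t, a, b]"
  let ?v = "bump_sum r c (diff_terms 1 (stress_terms 1 2)) x0"
  have "?v = bump r 2 t * (bump r 2 a * bump r 0 b + bump r 0 a * bump r 2 b)"
    by (simp add: x0_def stress_terms_def bump_sum_def diff_terms_def bump_mono_3 axis_def eval_nat_numeral algebra_simps)
  with t ab have "0 < ?v\<^sup>2"
    by simp
  also have "?v\<^sup>2 \<le> stress_energy r c x0"
    unfolding stress_energy_def
    by (intro member_le_sum[where i=1, THEN order_trans[rotated]] member_le_sum[where i=2, THEN order_trans[rotated]]
        member_le_sum[where i=1] sum_nonneg) auto
  finally have "0 < stress_energy r c x0" .
  moreover have "stress_energy r c integrable_on UNIV"
    by (rule integrable_on_UNIV_if_vanishing_outside_cbox[where a="c - vec r" and b="c + vec r"]) (simp_all add: continuous_on_stress_energy stress_energy_eq_0)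
  ultimately show ?thesis
    using integral_pos_if_continuous_pos continuous_on_stress_energy stress_energy_nonneg by blast
qed

definition bump_tensor :: "real \<Rightarrow> ('s::finite \<Rightarrow> real) \<Rightarrow> ('s \<Rightarrow> real^3) \<Rightarrow> 3 \<Rightarrow> 3 \<Rightarrow> real^3 \<Rightarrow> real" where
  "bump_tensor r w c i j x = (\<Sum>s\<in>UNIV. w s * bump_sum r (c s) (stress_terms i j) x)"

lemma ipd_bump_tensor:
  "ipd ks (bump_tensor r w c i j) x = (\<Sum>s\<in>UNIV. w s * bump_sum r (c s) (foldr diff_terms ks (stress_terms i j)) x)"
  unfolding bump_tensor_def[abs_def]
  by (simp add: ipd_sum_scaled smooth_fun_bump_sum ipd_bump_sum)

lemma pd_bump_tensor:
  "pd k (bump_tensor r w c i j) x = (\<Sum>s\<in>UNIV. w s * bump_sum r (c s) (diff_terms k (stress_terms i j)) x)"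
  using ipd_bump_tensor[of "[k]"] by simp

lemma smooth_fun_bump_tensor: "smooth_fun (bump_tensor r w c i j)"
  unfolding bump_tensor_def[abs_def] by (intro smooth_fun_sum_scaled smooth_fun_bump_sum) simp

lemma bump_tensor_sym: "bump_tensor r w c i j x = bump_tensor r w c j i x"
  by (simp add: bump_tensor_def stress_terms_sym[of i j])

lemma bump_tensor_trace: "(\<Sum>i\<in>UNIV. bump_tensor r w c i i x) = 0"
  unfolding bump_tensor_def
  by (subst sum.swap) (simp add: sum_distrib_left[symmetric] stress_terms_trace)

lemma bump_tensor_div: "(\<Sum>i\<in>UNIV. pd i (bump_tensor r w c i j) x) = 0"
  unfolding pd_bump_tensor
  by (subst sum.swap) (simp add: sum_distrib_left[symmetric] stress_terms_div)

lemma Lop_bump_tensor: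
  fixes w :: "'s::finite \<Rightarrow> real"
  shows "Lop (bump_tensor r w c) x = 0"
proof -
  let ?A = "\<lambda>s i j. bump_sum r (c s) (diff_terms j (diff_terms i (stress_terms i j))) x
                     - bump_sum r (c s) (diff_terms j (diff_terms j (stress_terms i i))) x"
  have "pd j (pd k (bump_tensor r w c i i')) x =
        (\<Sum>s\<in>UNIV. w s * bump_sum r (c s) (diff_terms j (diff_terms k (stress_terms i i'))) x)" for i i' j k
    using ipd_bump_tensor[of "[j, k]"] by simp
  then have "Lop (bump_tensor r w c) x = (\<Sum>i\<in>UNIV. \<Sum>j\<in>UNIV. \<Sum>s\<in>UNIV. w s * ?A s i j)"
    by (simp add: Lop_def sum_subtractf right_diff_distrib)
  also have "\<dots> = (\<Sum>s\<in>UNIV. w s * (\<Sum>i\<in>UNIV. \<Sum>j\<in>UNIV. ?A s i j))"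
    by (simp add: sum_distrib_left sum.swap[where B="UNIV::'s set"])
  finally show ?thesis
    by (simp only: stress_terms_Lop mult_zero_right sum.neutral_const)
qed

lemma power2_sum_if_products_0:
  fixes f :: "'s \<Rightarrow> real"
  assumes "finite S" and "\<And>s s'. s \<in> S \<Longrightarrow> s' \<in> S \<Longrightarrow> s \<noteq> s' \<Longrightarrow> f s * f s' = 0"
  shows "(\<Sum>s\<in>S. f s)\<^sup>2 = (\<Sum>s\<in>S. (f s)\<^sup>2)"
proof -
  have "(\<Sum>s'\<in>S. f s * f s') = (f s)\<^sup>2" if "s \<in> S" for s
  proof -
    have "(\<Sum>s'\<in>S - {s}. f s * f s') = 0"
      using assms(2) that by (intro sum.neutral) auto
    with assms(1) that show ?thesis
      by (simp add: sum.remove[of S s] power2_eq_square)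
  qed
  then show ?thesis
    by (simp add: power2_eq_square sum_product)
qed

lemma bump_tensor_energy:
  fixes w :: "'s::finite \<Rightarrow> real"
  assumes "disjoint_family (\<lambda>s. cube (c s) r)"
  shows "(\<Sum>i\<in>UNIV. \<Sum>j\<in>UNIV. \<Sum>k\<in>UNIV. (pd k (bump_tensor r w c i j) x)\<^sup>2) =
         (\<Sum>s\<in>UNIV. (w s)\<^sup>2 * stress_energy r (c s) x)"
proof -
  have "bump_sum r (c s) es x * bump_sum r (c s') es x = 0" if "s \<noteq> s'" for s s' es
  proof -
    have "x \<notin> cube (c s) r \<or> x \<notin> cube (c s') r"
      using assms that unfolding disjoint_family_on_def by blast
    then show ?thesis
      using bump_sum_eq_0 by (metis mult_eq_0_iff)
  qed
  then have "(pd k (bump_tensor r w c i j) x)\<^sup>2 =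
        (\<Sum>s\<in>UNIV. (w s)\<^sup>2 * (bump_sum r (c s) (diff_terms k (stress_terms i j)) x)\<^sup>2)" for i j k
    unfolding pd_bump_tensor
    by (subst power2_sum_if_products_0) (auto simp: power_mult_distrib)
  then show ?thesis
    by (simp add: stress_energy_def sum_distrib_left sum.swap[where B="UNIV::'s set"])
qed

lemma tsupport_bump_tensor:
  fixes w :: "'s::finite \<Rightarrow> real"
  shows "tsupport (bump_tensor r w c) \<subseteq> (\<Union>s. cbox (c s - vec r) (c s + vec r))"
  unfolding tsupport_def
proof (rule closure_minimal)
  show "{x. \<exists>i j. bump_tensor r w c i j x \<noteq> 0} \<subseteq> (\<Union>s. cbox (c s - vec r) (c s + vec r))"
  proof
    fix x
    assume "x \<in> {x. \<exists>i j. bump_tensor r w c i j x \<noteq> 0}"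
    then obtain i j s where "bump_sum r (c s) (stress_terms i j) x \<noteq> 0"
      unfolding bump_tensor_def by (force dest: sum.not_neutral_contains_not_neutral)
    then have "x \<in> cube (c s) r"
      using bump_sum_eq_0 by blast
    then show "x \<in> (\<Union>s. cbox (c s - vec r) (c s + vec r))"
      using box_subset_cbox by blast
  qed
  show "closed (\<Union>s. cbox (c s - vec r) (c s + vec r))"
    by (intro closed_UN) auto
qed

section \<open>Six copies around the sphere of radius 3/2\<close>

fun bool_sign :: "bool \<Rightarrow> real" where
  "bool_sign True = 1"
| "bool_sign False = -1"

fun centre :: "3 \<times> bool \<Rightarrow> real^3" where
  "centre (p, b) = (3/2 * bool_sign b) *\<^sub>R axis p 1"

lemma norm_centre: "norm (centre s) = 3/2"
  by (cases s; cases "snd s") auto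

lemma disjoint_family_cube_centre: "disjoint_family (\<lambda>s. cube (centre s) (1/8))"
  unfolding disjoint_family_on_def
proof (intro ballI impI)
  fix s s' :: "3 \<times> bool"
  assume "s \<noteq> s'"
  obtain p b q b' where s: "s = (p, b)" "s' = (q, b')"
    by fastforce
  have sep: "1 \<le> centre s $ p - centre s' $ p \<or> 1 \<le> centre s' $ p - centre s $ p"
    using \<open>s \<noteq> s'\<close> unfolding s by (cases b; cases b'; cases "p = q") (auto simp: axis_def)
  show "cube (centre s) (1/8) \<inter> cube (centre s') (1/8) = {}"
  proof (rule ccontr)
    assume "cube (centre s) (1/8) \<inter> cube (centre s') (1/8) \<noteq> {}"
    then obtain x where "x \<in> cube (centre s) (1/8)" "x \<in> cube (centre s') (1/8)"
      by blast
    then have "centre s $ p - 1/8 < x$p" "x$p < centre s $ p + 1/8"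
              "centre s' $ p - 1/8 < x$p" "x$p < centre s' $ p + 1/8"
      by (simp_all add: mem_box_cart)
    with sep show False
      by linarith
  qed
qed

lemma cbox_centre_subset_A1: "cbox (centre s - vec (1/8)) (centre s + vec (1/8)) \<subseteq> A1"
proof
  fix x
  assume x: "x \<in> cbox (centre s - vec (1/8)) (centre s + vec (1/8))"
  have bound: "\<bar>(x - centre s)$k\<bar> \<le> 1/8" for k
    using x[unfolded mem_box_cart, rule_format, of k] by (simp only: vector_add_component vector_minus_component vec_component abs_le_iff) linarith
  have "norm (x - centre s) \<le> (\<Sum>k\<in>UNIV. \<bar>(x - centre s)$k\<bar>)"
    by (rule norm_le_l1_cart)
  also have "\<dots> \<le> (\<Sum>k\<in>(UNIV::3 set). 1/8)"
    by (rule sum_mono) (rule bound)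
  finally have "norm (x - centre s) \<le> 3/8"
    by simp
  then show "x \<in> A1"
    using norm_triangle_ineq2[of x "centre s"] norm_triangle_ineq3[of x "centre s"] norm_centre[of s]
    by (auto simp: A1_def)
qed

text \<open>The two centres on the \<open>p\<close>-th axis carry the positive and the negative part of \<open>\<beta>$p\<close>;
  the factor \<open>3/2\<close> cancels the \<open>p\<close>-th coordinate of the centre.\<close>

fun weight :: "real^3 \<Rightarrow> 3 \<times> bool \<Rightarrow> real" where
  "weight \<beta> (p, b) = sqrt (max (bool_sign b * \<beta>$p) 0 / (3/2 * integral UNIV (stress_energy (1/8) (centre (p, b)))))"

lemma sum_weighted_moments:
  "(\<Sum>s\<in>UNIV. (weight \<beta> s)\<^sup>2 * (centre s $ p * integral UNIV (stress_energy (1/8) (centre s)))) = \<beta>$p"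
proof -
  have "(weight \<beta> (q, b))\<^sup>2 * (centre (q, b) $ p * integral UNIV (stress_energy (1/8) (centre (q, b))))
        = (if q = p then bool_sign b * max (bool_sign b * \<beta>$p) 0 else 0)" for q b
    using stress_energy_integral_pos[of "1/8" "centre (q, b)"]
    by (cases b) (auto simp: axis_def)
  then have "(\<Sum>s\<in>UNIV. (weight \<beta> s)\<^sup>2 * (centre s $ p * integral UNIV (stress_energy (1/8) (centre s))))
             = (\<Sum>q\<in>UNIV. \<Sum>b\<in>UNIV. if q = p then bool_sign b * max (bool_sign b * \<beta>$p) 0 else 0)"
    by (simp add: UNIV_Times_UNIV[symmetric] sum.cartesian_product' del: UNIV_Times_UNIV)
  also have "\<dots> = (\<Sum>b\<in>UNIV. bool_sign b * max (bool_sign b * \<beta>$p) 0)"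
    by (subst sum.swap) simp
  also have "\<dots> = \<beta>$p"
    by (simp add: UNIV_bool max_def)
  finally show ?thesis .
qed

lemma integral_moment_bump_tensor_energy:
  "integral A1 (\<lambda>x. x$p * (\<Sum>i\<in>UNIV. \<Sum>j\<in>UNIV. \<Sum>k\<in>UNIV. (pd k (bump_tensor (1/8) (weight \<beta>) centre i j) x)\<^sup>2)) = \<beta>$p"
proof -
  define E where "E x = (\<Sum>s\<in>UNIV. (weight \<beta> s)\<^sup>2 * stress_energy (1/8) (centre s) x)" for x
  have "((\<lambda>x. \<Sum>s\<in>UNIV. (weight \<beta> s)\<^sup>2 * (x$p * stress_energy (1/8) (centre s) x)) has_integral
         (\<Sum>s\<in>UNIV. (weight \<beta> s)\<^sup>2 * (centre s $ p * integral UNIV (stress_energy (1/8) (centre s))))) UNIV"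
    by (intro has_integral_sum has_integral_mult_right has_integral_moment_stress_energy) simp
  moreover have "(\<lambda>x. x$p * E x) = (\<lambda>x. \<Sum>s\<in>UNIV. (weight \<beta> s)\<^sup>2 * (x$p * stress_energy (1/8) (centre s) x))"
    by (simp add: E_def sum_distrib_left algebra_simps)
  ultimately have moment: "((\<lambda>x. x$p * E x) has_integral \<beta>$p) UNIV"
    by (simp only: sum_weighted_moments)
  have E0: "E x = 0" if "x \<notin> A1" for x
  proof -
    have "x \<notin> cbox (centre s - vec (1/8)) (centre s + vec (1/8))" for s
      using that cbox_centre_subset_A1 by blast
    then show ?thesis
      by (simp add: E_def stress_energy_eq_0)
  qed
  have "integral A1 (\<lambda>x. x$p * E x) = integral UNIV (\<lambda>x. if x \<in> A1 then x$p * E x else 0)"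
    by (simp only: integral_restrict_UNIV)
  also have "(\<lambda>x. if x \<in> A1 then x$p * E x else 0) = (\<lambda>x. x$p * E x)"
    using E0 by auto
  finally have "integral A1 (\<lambda>x. x$p * E x) = \<beta>$p"
    using integral_unique[OF moment] by simp
  then show ?thesis
    by (simp add: E_def bump_tensor_energy[OF disjoint_family_cube_centre])
qed

lemma bounded_A1: "bounded A1"
  unfolding A1_def bounded_iff by (intro exI[of _ 2]) auto

theorem theorem2p8:
  fixes \<beta> :: "real^3"
  shows "\<exists>\<sigma> :: 3 \<Rightarrow> 3 \<Rightarrow> real^3 \<Rightarrow> real.
     (\<forall>i j. smooth_fun (\<sigma> i j)) \<and>
     (\<forall>i j x. \<sigma> i j x = \<sigma> j i x) \<and>
     (\<forall>x. (\<Sum>i\<in>UNIV. \<sigma> i i x) = 0) \<and>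
     (\<forall>j x. (\<Sum>i\<in>UNIV. pd i (\<sigma> i j) x) = 0) \<and>
     compact (tsupport \<sigma>) \<and> tsupport \<sigma> \<subseteq> A1 \<and>
     (\<forall>x. Lop \<sigma> x = 0) \<and>
     (\<forall>p. integral A1 (\<lambda>x. x $ p * (\<Sum>i\<in>UNIV. \<Sum>j\<in>UNIV. \<Sum>k\<in>UNIV. (pd k (\<sigma> i j) x)\<^sup>2)) = \<beta> $ p)"
proof (intro exI[of _ "bump_tensor (1/8) (weight \<beta>) centre"] conjI allI)
  show supp: "tsupport (bump_tensor (1/8) (weight \<beta>) centre) \<subseteq> A1"
    using tsupport_bump_tensor cbox_centre_subset_A1 by fast
  show "compact (tsupport (bump_tensor (1/8) (weight \<beta>) centre))"
    using bounded_subset[OF bounded_A1 supp] by (simp add: compact_eq_bounded_closed tsupport_def)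
qed (simp_all add: smooth_fun_bump_tensor bump_tensor_sym bump_tensor_trace bump_tensor_div
       Lop_bump_tensor integral_moment_bump_tensor_energy)

end
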